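(* Let $l\ge2$, $a=(a_1,\dots,a_l)$ with all $a_i>0$, and $b=(b_1,\dots,b_l)$ with all $b_i\neq0$, the $b_i$ pairwise distinct, and $b_{i_1}b_{j_1}<0$ for some $i_1\ne j_1$. Let $\bar s(l,a,b)\in\{1,2,\dots\}\cup\{\infty\}$ be the minimal integer $s\ge1$ such that the system $$\sum_{i=1}^l a_ib_i^uc_i^{u+1}=0,\qquad u=0,1,\dots,s,$$ has no real solution $(c_1,\dots,c_l)$ with at least one $c_i\neq0$ ($\bar s=\infty$ if no such $s$ exists). Then: (a) if $\sum_{i\in I}a_i\prod_{j\in I\setminus\{i\}}b_j\neq0$ for every subset $I\subseteq\{1,\dots,l\}$ with $|I|\ge2$, then $\bar s(l,a,b)\le l-1$; (b) if $\sum_{i\in I}a_i\prod_{j\in I\setminus\{i\}}b_j=0$ for some subset $I$ with $|I|\ge2$, then $\bar s(l,a,b)=\infty$; (c) under the hypothesis of (a): if $l=2$ then $\bar s(l,a,b)=1$; if $l=3$ and $\sum_{i=1}^3a_i\prod_{j\neq i}b_j>0$ then $\bar s(l,a,b)=1$, while if $l=3$ and $\sum_{i=1}^3a_i\prod_{j\neq i}b_j<0$ then $\bar s(l,a,b)=2$. *)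

theory Defs
  imports Main "HOL-Library.Extended_Nat"
begin

text \<open>Vectors a, b, c in R^l are represented as functions nat => real, indices 1..l.\<close>

definition has_nontriv_sol :: "nat \<Rightarrow> (nat \<Rightarrow> real) \<Rightarrow> (nat \<Rightarrow> real) \<Rightarrow> nat \<Rightarrow> bool" where
  "has_nontriv_sol l a b s \<longleftrightarrow>
     (\<exists>c :: nat \<Rightarrow> real. (\<exists>i\<in>{1..l}. c i \<noteq> 0) \<and>
        (\<forall>u\<le>s. (\<Sum>i=1..l. a i * b i ^ u * c i ^ (u + 1)) = 0))"

definition sbar :: "nat \<Rightarrow> (nat \<Rightarrow> real) \<Rightarrow> (nat \<Rightarrow> real) \<Rightarrow> enat" where
  "sbar l a b =
     (if \<exists>s::nat. s \<ge> 1 \<and> \<not> has_nontriv_sol l a b s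
      then enat (LEAST s::nat. s \<ge> 1 \<and> \<not> has_nontriv_sol l a b s)
      else \<infinity>)"

definition Sigma_ab :: "nat set \<Rightarrow> (nat \<Rightarrow> real) \<Rightarrow> (nat \<Rightarrow> real) \<Rightarrow> real" where
  "Sigma_ab I a b = (\<Sum>i\<in>I. a i * (\<Prod>j\<in>I - {i}. b j))"

end

theory Submission
  imports Defs
begin

text \<open>
  With \<open>w\<^sub>i = a\<^sub>i / b\<^sub>i\<close> and \<open>x\<^sub>i = b\<^sub>i c\<^sub>i\<close> the system for \<open>s\<close> says that the weighted power
  sums \<open>\<Sum>\<^sub>i w\<^sub>i x\<^sub>i\<^sup>k\<close> vanish for \<open>k = 1, \<dots>, s + 1\<close>, and \<open>\<Sigma>(I) = (\<Prod>\<^sub>I b\<^sub>j) \<Sum>\<^sub>I w\<^sub>i\<close>.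
  If \<open>s + 1 \<ge> l\<close>, a Vandermonde argument shows that the total weight carried by every
  nonzero value of \<open>x\<close> is zero; the indices carrying that value form a set \<open>I\<close> with
  \<open>\<Sigma>(I) = 0\<close>, and \<open>|I| \<ge> 2\<close> because all \<open>w\<^sub>i \<noteq> 0\<close>. Conversely, if \<open>\<Sigma>(I) = 0\<close>, the
  indicator of \<open>I\<close> solves all equations at once. For \<open>l = 3\<close> and \<open>s = 1\<close> eliminating
  \<open>x\<^sub>3\<close> leaves a binary quadratic form of determinant \<open>w\<^sub>1 w\<^sub>2 w\<^sub>3 (w\<^sub>1 + w\<^sub>2 + w\<^sub>3)\<close>,
  whose sign is that of \<open>\<Sigma>({1,2,3})\<close>: the form is definite or isotropic accordingly.
\<close>

lemma power_sums_zero_imp_fibre_sum_zero: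
  fixes w x :: "'a \<Rightarrow> 'b::idom"
  assumes "finite S" and "card (x ` S - {0}) \<le> n"
    and "\<forall>k\<in>{1..n}. (\<Sum>i\<in>S. w i * x i ^ k) = 0" and "y \<noteq> 0"
  shows "(\<Sum>i\<in>{i\<in>S. x i = y}. w i) = 0"
  using assms
proof (induction n arbitrary: S w)
  case 0
  then have "{i\<in>S. x i = y} = {}" by auto
  then show ?case by (metis sum.empty)
next
  case (Suc n)
  show ?case
  proof (cases "\<exists>z\<in>x ` S - {0}. z \<noteq> y")
    case True
    then obtain z where z: "z \<in> x ` S - {0}" "z \<noteq> y" by blast
    \<comment> \<open>Multiplying the weights by \<open>x\<^sub>i - z\<close> kills the value \<open>z\<close> and shifts the power sums down by one.\<close>
    define S' where "S' = {i\<in>S. x i \<noteq> z}"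
    define w' where "w' i = w i * (x i - z)" for i
    have "x ` S' - {0} \<subseteq> (x ` S - {0}) - {z}" by (auto simp: S'_def)
    then have "card (x ` S' - {0}) \<le> card (x ` S - {0}) - 1"
      using z Suc.prems(1) by (metis card_Diff_singleton card_mono finite_Diff finite_imageI)
    then have card_S': "card (x ` S' - {0}) \<le> n" using Suc.prems(2) by linarith
    have eqs: "\<forall>k\<in>{1..n}. (\<Sum>i\<in>S'. w' i * x i ^ k) = 0"
    proof
      fix k assume "k \<in> {1..n}"
      have "(\<Sum>i\<in>S'. w' i * x i ^ k) = (\<Sum>i\<in>S. w' i * x i ^ k)"
        by (rule sum.mono_neutral_left) (use Suc.prems(1) in \<open>auto simp: S'_def w'_def\<close>)
      also have "\<dots> = (\<Sum>i\<in>S. w i * x i ^ Suc k) - z * (\<Sum>i\<in>S. w i * x i ^ k)"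
        by (simp add: w'_def sum_subtractf sum_distrib_left algebra_simps)
      also have "\<dots> = 0" using Suc.prems(3) \<open>k \<in> {1..n}\<close> by (simp del: power_Suc)
      finally show "(\<Sum>i\<in>S'. w' i * x i ^ k) = 0" .
    qed
    have "finite S'" using Suc.prems(1) by (simp add: S'_def)
    from Suc.IH[OF this card_S' eqs Suc.prems(4)]
    have "(\<Sum>i\<in>{i\<in>S'. x i = y}. w' i) = 0" .
    moreover have "{i\<in>S'. x i = y} = {i\<in>S. x i = y}" using z by (auto simp: S'_def)
    moreover have "(\<Sum>i\<in>{i\<in>S. x i = y}. w' i) = (y - z) * (\<Sum>i\<in>{i\<in>S. x i = y}. w i)"
      by (simp add: w'_def sum_distrib_left mult.commute)
    ultimately show ?thesis using z by simp
  next
    case False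
    then have "(\<Sum>i\<in>S. w i * x i) = (\<Sum>i\<in>{i\<in>S. x i = y}. w i * x i)"
      by (intro sum.mono_neutral_right) (use Suc.prems(1) in auto)
    also have "\<dots> = y * (\<Sum>i\<in>{i\<in>S. x i = y}. w i)"
      by (simp add: sum_distrib_left mult.commute)
    finally show ?thesis using Suc.prems(3,4) by force
  qed
qed

lemma Sigma_ab_eq_prod_times_sum_div:
  assumes "finite I" and "\<forall>i\<in>I. b i \<noteq> 0"
  shows "Sigma_ab I a b = (\<Prod>j\<in>I. b j) * (\<Sum>i\<in>I. a i / b i)"
  unfolding Sigma_ab_def sum_distrib_left
proof (rule sum.cong[OF refl])
  fix i assume "i \<in> I"
  then show "a i * (\<Prod>j\<in>I - {i}. b j) = (\<Prod>j\<in>I. b j) * (a i / b i)"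
    using assms prod.remove[OF assms(1), of i b] by simp
qed

lemma has_nontriv_sol_iff_power_sums:
  assumes "\<forall>i\<in>{1..l}. b i \<noteq> 0"
  shows "has_nontriv_sol l a b s \<longleftrightarrow>
    (\<exists>x. (\<exists>i\<in>{1..l}. x i \<noteq> 0) \<and> (\<forall>k\<in>{1..Suc s}. (\<Sum>i=1..l. a i / b i * x i ^ k) = 0))"
proof -
  have sum_eq: "(\<Sum>i=1..l. a i * b i ^ u * c i ^ (u + 1))
      = (\<Sum>i=1..l. a i / b i * (b i * c i) ^ Suc u)" for c u
    using assms by (intro sum.cong) (simp_all add: field_simps)
  show ?thesis
  proof
    assume "has_nontriv_sol l a b s"
    then obtain c where c: "\<exists>i\<in>{1..l}. c i \<noteq> 0"
      and sums: "\<forall>u\<le>s. (\<Sum>i=1..l. a i * b i ^ u * c i ^ (u + 1)) = 0"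
      unfolding has_nontriv_sol_def by blast
    have "(\<Sum>i=1..l. a i / b i * (b i * c i) ^ k) = 0" if k: "k \<in> {1..Suc s}" for k
    proof -
      obtain u where "k = Suc u" "u \<le> s" using k by (cases k) auto
      with sums have "(\<Sum>i=1..l. a i * b i ^ u * c i ^ (u + 1)) = 0" by blast
      then show ?thesis by (simp only: sum_eq \<open>k = Suc u\<close>)
    qed
    moreover have "\<exists>i\<in>{1..l}. b i * c i \<noteq> 0" using c assms by auto
    ultimately show "\<exists>x. (\<exists>i\<in>{1..l}. x i \<noteq> 0) \<and> (\<forall>k\<in>{1..Suc s}. (\<Sum>i=1..l. a i / b i * x i ^ k) = 0)"
      by (intro exI[of _ "\<lambda>i. b i * c i"]) blast
  next
    assume "\<exists>x. (\<exists>i\<in>{1..l}. x i \<noteq> 0) \<and> (\<forall>k\<in>{1..Suc s}. (\<Sum>i=1..l. a i / b i * x i ^ k) = 0)"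
    then obtain x where x: "\<exists>i\<in>{1..l}. x i \<noteq> 0"
      and sums: "\<forall>k\<in>{1..Suc s}. (\<Sum>i=1..l. a i / b i * x i ^ k) = 0"
      by blast
    have cancel: "(\<Sum>i=1..l. a i / b i * (b i * (x i / b i)) ^ k) = (\<Sum>i=1..l. a i / b i * x i ^ k)"
      for k using assms by (intro sum.cong) auto
    have "(\<Sum>i=1..l. a i * b i ^ u * (x i / b i) ^ (u + 1)) = 0" if "u \<le> s" for u
      unfolding sum_eq cancel by (rule sums[rule_format]) (use that in simp)
    moreover have "\<exists>i\<in>{1..l}. x i / b i \<noteq> 0" using x assms by auto
    ultimately show "has_nontriv_sol l a b s"
      unfolding has_nontriv_sol_def by (intro exI[of _ "\<lambda>i. x i / b i"]) blast
  qed
qed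

lemma not_has_nontriv_sol_if_Sigma_ab_nonzero:
  assumes a_pos: "\<forall>i\<in>{1..l}. a i > 0" and b_nonzero: "\<forall>i\<in>{1..l}. b i \<noteq> 0"
    and Sigma_nonzero: "\<forall>I. I \<subseteq> {1..l} \<and> card I \<ge> 2 \<longrightarrow> Sigma_ab I a b \<noteq> 0"
    and "l \<le> Suc s"
  shows "\<not> has_nontriv_sol l a b s"
proof
  assume "has_nontriv_sol l a b s"
  then obtain x i0 where i0: "i0 \<in> {1..l}" "x i0 \<noteq> 0"
    and sums: "\<forall>k\<in>{1..Suc s}. (\<Sum>i=1..l. a i / b i * x i ^ k) = 0"
    using b_nonzero by (auto simp: has_nontriv_sol_iff_power_sums)
  define I where "I = {i\<in>{1..l}. x i = x i0}"
  have "card (x ` {1..l} - {0}) \<le> card (x ` {1..l})" by (intro card_mono) auto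
  also have "\<dots> \<le> l" using card_image_le[of "{1..l}" x] by simp
  finally have "(\<Sum>i\<in>I. a i / b i) = 0"
    unfolding I_def using sums \<open>l \<le> Suc s\<close> i0(2)
    by (intro power_sums_zero_imp_fibre_sum_zero) auto
  have I: "finite I" "I \<subseteq> {1..l}" "i0 \<in> I" using i0 by (auto simp: I_def)
  show False
  proof (cases "card I \<ge> 2")
    case True
    then have "Sigma_ab I a b = 0"
      using Sigma_ab_eq_prod_times_sum_div[of I b a] \<open>(\<Sum>i\<in>I. a i / b i) = 0\<close> I b_nonzero by auto
    with Sigma_nonzero True I show False by blast
  next
    case False
    then have "card I \<le> Suc 0" by simp
    with I have "I = {i0}" using card_le_Suc0_iff_eq[of I] by blast
    then have "a i0 / b i0 = 0" using \<open>(\<Sum>i\<in>I. a i / b i) = 0\<close> by simp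
    moreover have "a i0 > 0" "b i0 \<noteq> 0" using a_pos b_nonzero i0(1) by auto
    ultimately show False by simp
  qed
qed

lemma has_nontriv_sol_if_Sigma_ab_zero:
  assumes b_nonzero: "\<forall>i\<in>{1..l}. b i \<noteq> 0"
    and I: "I \<subseteq> {1..l}" "card I \<ge> 2" "Sigma_ab I a b = 0"
  shows "has_nontriv_sol l a b s"
proof -
  have "finite I" using I(1) finite_subset by blast
  moreover have "\<forall>i\<in>I. b i \<noteq> 0" using b_nonzero I(1) by blast
  ultimately have "(\<Sum>i\<in>I. a i / b i) = 0"
    using Sigma_ab_eq_prod_times_sum_div[of I b a] I(3) by simp
  obtain i0 where "i0 \<in> I" using I(2) by fastforce
  define x where "x i = (if i \<in> I then 1 else 0 :: real)" for i
  have "(\<Sum>i=1..l. a i / b i * x i ^ k) = (\<Sum>i\<in>I. a i / b i)" if "k \<ge> 1" for k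
  proof -
    have "(\<Sum>i=1..l. a i / b i * x i ^ k) = (\<Sum>i=1..l. if i \<in> I then a i / b i else 0)"
      using that by (intro sum.cong) (auto simp: x_def)
    also have "\<dots> = (\<Sum>i\<in>I. a i / b i)"
      using I(1) by (simp add: sum.inter_restrict[symmetric] Int_absorb1)
    finally show ?thesis .
  qed
  then have "\<forall>k\<in>{1..Suc s}. (\<Sum>i=1..l. a i / b i * x i ^ k) = 0"
    using \<open>(\<Sum>i\<in>I. a i / b i) = 0\<close> by simp
  moreover have "\<exists>i\<in>{1..l}. x i \<noteq> 0" using \<open>i0 \<in> I\<close> I(1) by (auto simp: x_def)
  ultimately show ?thesis using b_nonzero by (auto simp: has_nontriv_sol_iff_power_sums)
qed

lemma sbar_le: "s \<ge> 1 \<Longrightarrow> \<not> has_nontriv_sol l a b s \<Longrightarrow> sbar l a b \<le> enat s"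
  unfolding sbar_def by (auto intro: Least_le)

lemma Suc_le_sbar:
  assumes "\<forall>t\<in>{1..s}. has_nontriv_sol l a b t"
  shows "enat (Suc s) \<le> sbar l a b"
proof (cases "\<exists>t. t \<ge> 1 \<and> \<not> has_nontriv_sol l a b t")
  case True
  let ?m = "LEAST t. t \<ge> 1 \<and> \<not> has_nontriv_sol l a b t"
  from LeastI_ex[OF True] have "?m \<ge> 1" "\<not> has_nontriv_sol l a b ?m" by auto
  with assms have "Suc s \<le> ?m" by (meson atLeastAtMost_iff not_less_eq_eq)
  moreover have "sbar l a b = enat ?m" using True by (simp add: sbar_def)
  ultimately show ?thesis by simp
qed (auto simp: sbar_def)

lemma sbar_eq_infinity: "(\<And>s. has_nontriv_sol l a b s) \<Longrightarrow> sbar l a b = \<infinity>"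
  unfolding sbar_def by auto

lemma binary_form_definite:
  fixes A B C x y :: real
  assumes "A * C - B\<^sup>2 > 0" and "A * x\<^sup>2 + 2 * B * x * y + C * y\<^sup>2 = 0"
  shows "x = 0 \<and> y = 0"
proof -
  have "A * (A * x\<^sup>2 + 2 * B * x * y + C * y\<^sup>2) = (A * x + B * y)\<^sup>2 + (A * C - B\<^sup>2) * y\<^sup>2"
    by (simp add: power2_eq_square algebra_simps)
  with assms have sos: "(A * x + B * y)\<^sup>2 + (A * C - B\<^sup>2) * y\<^sup>2 = 0" by simp
  moreover have "(A * C - B\<^sup>2) * y\<^sup>2 \<ge> 0" using assms(1) by simp
  moreover have "(A * x + B * y)\<^sup>2 \<ge> 0" by simp
  ultimately have "(A * C - B\<^sup>2) * y\<^sup>2 = 0" by linarith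
  then have "y = 0" using assms(1) by simp
  moreover have "A \<noteq> 0" using assms(1) by (cases "A = 0") auto
  ultimately show ?thesis using sos by simp
qed

lemma binary_form_isotropic:
  fixes A B C :: real
  assumes "B\<^sup>2 - A * C > 0"
  obtains x y where "x \<noteq> 0 \<or> y \<noteq> 0" and "A * x\<^sup>2 + 2 * B * x * y + C * y\<^sup>2 = 0"
proof (cases "A = 0")
  case True
  then show ?thesis by (intro that[of 1 0]) simp_all
next
  case False
  define d where "d = sqrt (B\<^sup>2 - A * C)"
  define r where "r = (d - B) / A"
  have Ar: "A * r = d - B" using False by (simp add: r_def)
  have "A * (A * r\<^sup>2 + 2 * B * r * 1 + C * 1\<^sup>2) = (A * r)\<^sup>2 + 2 * B * (A * r) + A * C"
    by (simp add: power2_eq_square algebra_simps)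
  also have "\<dots> = d\<^sup>2 - (B\<^sup>2 - A * C)"
    unfolding Ar by (simp add: power2_eq_square algebra_simps)
  also have "\<dots> = 0" using assms by (simp add: d_def)
  finally have "A * (A * r\<^sup>2 + 2 * B * r * 1 + C * 1\<^sup>2) = 0" .
  then show ?thesis using False by (intro that[of r 1]) simp_all
qed

lemma three_power_sums_eliminate:
  fixes w1 w2 w3 x1 x2 x3 :: real
  assumes "w1 * x1 + w2 * x2 + w3 * x3 = 0"
  shows "w3 * (w1 * x1\<^sup>2 + w2 * x2\<^sup>2 + w3 * x3\<^sup>2)
    = w1 * (w1 + w3) * x1\<^sup>2 + 2 * (w1 * w2) * x1 * x2 + w2 * (w2 + w3) * x2\<^sup>2"
proof -
  have "w3 * x3 = - (w1 * x1 + w2 * x2)" using assms by linarith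
  have "w3 * (w1 * x1\<^sup>2 + w2 * x2\<^sup>2 + w3 * x3\<^sup>2) = w3 * w1 * x1\<^sup>2 + w3 * w2 * x2\<^sup>2 + (w3 * x3)\<^sup>2"
    by (simp add: power2_eq_square algebra_simps)
  also have "\<dots> = w1 * (w1 + w3) * x1\<^sup>2 + 2 * (w1 * w2) * x1 * x2 + w2 * (w2 + w3) * x2\<^sup>2"
    unfolding \<open>w3 * x3 = _\<close> by (simp add: power2_eq_square algebra_simps)
  finally show ?thesis .
qed

lemma three_power_sums_determinant:
  fixes w1 w2 w3 :: real
  shows "w1 * (w1 + w3) * (w2 * (w2 + w3)) - (w1 * w2)\<^sup>2 = w1 * w2 * w3 * (w1 + w2 + w3)"
  by (simp add: power2_eq_square algebra_simps)

lemma three_power_sums_zero_imp_zero: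
  fixes w1 w2 w3 x1 x2 x3 :: real
  assumes "w1 * w2 * w3 * (w1 + w2 + w3) > 0"
    and "w1 * x1 + w2 * x2 + w3 * x3 = 0" and "w1 * x1\<^sup>2 + w2 * x2\<^sup>2 + w3 * x3\<^sup>2 = 0"
  shows "x1 = 0 \<and> x2 = 0 \<and> x3 = 0"
proof -
  have "w3 \<noteq> 0" using assms(1) by auto
  have "x1 = 0 \<and> x2 = 0"
    using assms three_power_sums_eliminate[OF assms(2)] three_power_sums_determinant[of w1 w3 w2]
    by (intro binary_form_definite[of "w1 * (w1 + w3)" "w2 * (w2 + w3)" "w1 * w2"]) simp_all
  with assms(2) \<open>w3 \<noteq> 0\<close> show ?thesis by simp
qed

lemma three_power_sums_zero_nontrivial:
  fixes w1 w2 w3 :: real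
  assumes "w1 * w2 * w3 * (w1 + w2 + w3) < 0"
  obtains x1 x2 x3 where "x1 \<noteq> 0 \<or> x2 \<noteq> 0"
    and "w1 * x1 + w2 * x2 + w3 * x3 = 0" and "w1 * x1\<^sup>2 + w2 * x2\<^sup>2 + w3 * x3\<^sup>2 = 0"
proof -
  have "w3 \<noteq> 0" using assms by auto
  have "(w1 * w2)\<^sup>2 - w1 * (w1 + w3) * (w2 * (w2 + w3)) > 0"
    using three_power_sums_determinant[of w1 w3 w2] assms by simp
  then obtain x1 x2 where nontriv: "x1 \<noteq> 0 \<or> x2 \<noteq> 0"
    and form: "w1 * (w1 + w3) * x1\<^sup>2 + 2 * (w1 * w2) * x1 * x2 + w2 * (w2 + w3) * x2\<^sup>2 = 0"
    by (rule binary_form_isotropic)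
  define x3 where "x3 = - (w1 * x1 + w2 * x2) / w3"
  have linear: "w1 * x1 + w2 * x2 + w3 * x3 = 0" using \<open>w3 \<noteq> 0\<close> by (simp add: x3_def)
  then have "w1 * x1\<^sup>2 + w2 * x2\<^sup>2 + w3 * x3\<^sup>2 = 0"
    using three_power_sums_eliminate[OF linear] form \<open>w3 \<noteq> 0\<close> by simp
  with nontriv linear show ?thesis by (intro that) auto
qed

lemma sum_one_to_three: "(\<Sum>i::nat=1..3. f i) = f 1 + f 2 + (f 3 :: 'a::comm_monoid_add)"
  by (simp add: eval_nat_numeral)

lemma prod_one_to_three: "(\<Prod>i::nat=1..3. f i) = f 1 * f 2 * (f 3 :: 'a::comm_monoid_mult)"
  by (simp add: eval_nat_numeral)

lemma bex_one_to_three: "(\<exists>i\<in>{1..3::nat}. P i) \<longleftrightarrow> P 1 \<or> P 2 \<or> P 3"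
  by (auto simp: eval_nat_numeral le_Suc_eq)

lemma three_weights_determinant_eq_Sigma_ab:
  assumes "\<forall>i\<in>{1..3}. b i \<noteq> 0"
  shows "a 1 / b 1 * (a 2 / b 2) * (a 3 / b 3) * (a 1 / b 1 + a 2 / b 2 + a 3 / b 3)
    = a 1 * a 2 * a 3 / (b 1 * b 2 * b 3)\<^sup>2 * Sigma_ab {1..3} a b"
proof -
  have b: "b 1 \<noteq> 0" "b 2 \<noteq> 0" "b 3 \<noteq> 0" using assms by auto
  have "Sigma_ab {1..3} a b = (\<Prod>j\<in>{1..3}. b j) * (\<Sum>i\<in>{1..3}. a i / b i)"
    using assms by (intro Sigma_ab_eq_prod_times_sum_div) auto
  also have "\<dots> = b 1 * b 2 * b 3 * (a 1 / b 1 + a 2 / b 2 + a 3 / b 3)"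
    unfolding sum_one_to_three prod_one_to_three ..
  finally have Sigma: "Sigma_ab {1..3} a b = b 1 * b 2 * b 3 * (a 1 / b 1 + a 2 / b 2 + a 3 / b 3)" .
  show ?thesis using b unfolding Sigma by (simp add: field_simps power2_eq_square)
qed

lemma not_has_nontriv_sol_three_if_Sigma_ab_pos:
  assumes "\<forall>i\<in>{1..3}. a i > 0" and b_nonzero: "\<forall>i\<in>{1..3}. b i \<noteq> 0"
    and "Sigma_ab {1..3} a b > 0"
  shows "\<not> has_nontriv_sol 3 a b 1"
proof
  assume "has_nontriv_sol 3 a b 1"
  then obtain x where nontriv: "\<exists>i\<in>{1..3}. x i \<noteq> 0"
    and sums: "\<forall>k\<in>{1..2}. (\<Sum>i=1..3. a i / b i * x i ^ k) = 0"
    using b_nonzero by (auto simp: has_nontriv_sol_iff_power_sums numeral_2_eq_2)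
  have "a 1 * a 2 * a 3 / (b 1 * b 2 * b 3)\<^sup>2 > 0" using assms by simp
  then have "a 1 / b 1 * (a 2 / b 2) * (a 3 / b 3) * (a 1 / b 1 + a 2 / b 2 + a 3 / b 3) > 0"
    unfolding three_weights_determinant_eq_Sigma_ab[OF b_nonzero]
    using assms(3) by (rule mult_pos_pos)
  moreover have "(\<Sum>i=1..3. a i / b i * x i ^ 1) = 0" "(\<Sum>i=1..3. a i / b i * x i ^ 2) = 0"
    by (rule sums[rule_format], simp)+
  then have "a 1 / b 1 * x 1 + a 2 / b 2 * x 2 + a 3 / b 3 * x 3 = 0"
    and "a 1 / b 1 * (x 1)\<^sup>2 + a 2 / b 2 * (x 2)\<^sup>2 + a 3 / b 3 * (x 3)\<^sup>2 = 0"
    unfolding sum_one_to_three power_one_right .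
  ultimately have "x 1 = 0 \<and> x 2 = 0 \<and> x 3 = 0" by (rule three_power_sums_zero_imp_zero)
  with nontriv show False unfolding bex_one_to_three by blast
qed

lemma has_nontriv_sol_three_if_Sigma_ab_neg:
  assumes "\<forall>i\<in>{1..3}. a i > 0" and b_nonzero: "\<forall>i\<in>{1..3}. b i \<noteq> 0"
    and "Sigma_ab {1..3} a b < 0"
  shows "has_nontriv_sol 3 a b 1"
proof -
  have "a 1 * a 2 * a 3 / (b 1 * b 2 * b 3)\<^sup>2 > 0" using assms by simp
  then have "a 1 / b 1 * (a 2 / b 2) * (a 3 / b 3) * (a 1 / b 1 + a 2 / b 2 + a 3 / b 3) < 0"
    unfolding three_weights_determinant_eq_Sigma_ab[OF b_nonzero]
    using assms(3) by (rule mult_pos_neg)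
  then obtain x1 x2 x3 where nontriv: "x1 \<noteq> 0 \<or> x2 \<noteq> 0"
    and linear: "a 1 / b 1 * x1 + a 2 / b 2 * x2 + a 3 / b 3 * x3 = 0"
    and quadratic: "a 1 / b 1 * x1\<^sup>2 + a 2 / b 2 * x2\<^sup>2 + a 3 / b 3 * x3\<^sup>2 = 0"
    by (rule three_power_sums_zero_nontrivial)
  define x :: "nat \<Rightarrow> real" where "x i = (if i = 1 then x1 else if i = 2 then x2 else x3)" for i
  have "(\<Sum>i=1..3. a i / b i * x i ^ k) = a 1 / b 1 * x1 ^ k + a 2 / b 2 * x2 ^ k + a 3 / b 3 * x3 ^ k"
    for k unfolding sum_one_to_three by (simp add: x_def)
  moreover have "{1..Suc 1} = {1, 2::nat}" by auto
  ultimately have "\<forall>k\<in>{1..Suc 1}. (\<Sum>i=1..3. a i / b i * x i ^ k) = 0"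
    using linear quadratic by simp
  moreover have "\<exists>i\<in>{1..3}. x i \<noteq> 0" unfolding bex_one_to_three x_def using nontriv by auto
  ultimately show ?thesis unfolding has_nontriv_sol_iff_power_sums[OF b_nonzero] by blast
qed

theorem propositionF1:
  fixes l :: nat and a b :: "nat \<Rightarrow> real"
  assumes "l \<ge> 2"
    and "\<forall>i\<in>{1..l}. a i > 0"
    and "\<forall>i\<in>{1..l}. b i \<noteq> 0"
    and "inj_on b {1..l}"
    and "\<exists>i1\<in>{1..l}. \<exists>j1\<in>{1..l}. i1 \<noteq> j1 \<and> b i1 * b j1 < 0"
  shows "((\<forall>I. I \<subseteq> {1..l} \<and> card I \<ge> 2 \<longrightarrow> Sigma_ab I a b \<noteq> 0)
            \<longrightarrow> sbar l a b \<le> enat (l - 1))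
       \<and> ((\<exists>I. I \<subseteq> {1..l} \<and> card I \<ge> 2 \<and> Sigma_ab I a b = 0)
            \<longrightarrow> sbar l a b = \<infinity>)
       \<and> ((\<forall>I. I \<subseteq> {1..l} \<and> card I \<ge> 2 \<longrightarrow> Sigma_ab I a b \<noteq> 0)
            \<longrightarrow> (l = 2 \<longrightarrow> sbar l a b = 1)
              \<and> (l = 3 \<and> Sigma_ab {1..3} a b > 0 \<longrightarrow> sbar l a b = 1)
              \<and> (l = 3 \<and> Sigma_ab {1..3} a b < 0 \<longrightarrow> sbar l a b = 2))"
proof (intro conjI impI)
  assume "\<exists>I. I \<subseteq> {1..l} \<and> card I \<ge> 2 \<and> Sigma_ab I a b = 0"
  then show "sbar l a b = \<infinity>"
    using has_nontriv_sol_if_Sigma_ab_zero[OF assms(3)] by (blast intro: sbar_eq_infinity)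
next
  assume nonzero: "\<forall>I. I \<subseteq> {1..l} \<and> card I \<ge> 2 \<longrightarrow> Sigma_ab I a b \<noteq> 0"
  then have "\<not> has_nontriv_sol l a b (l - 1)"
    using assms(1) by (intro not_has_nontriv_sol_if_Sigma_ab_nonzero[OF assms(2,3)]) auto
  then show le: "sbar l a b \<le> enat (l - 1)" using assms(1) by (intro sbar_le) auto
  have ge1: "1 \<le> sbar l a b" using Suc_le_sbar[of 0] by (simp add: one_enat_def)
  show "l = 2 \<Longrightarrow> sbar l a b = 1" using le ge1 by (simp add: one_enat_def)
  show "l = 3 \<and> Sigma_ab {1..3} a b > 0 \<Longrightarrow> sbar l a b = 1"
    using not_has_nontriv_sol_three_if_Sigma_ab_pos[of a b] sbar_le[of 1 l a b] assms(2,3) ge1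
    by (auto simp: one_enat_def)
  show "sbar l a b = 2" if "l = 3 \<and> Sigma_ab {1..3} a b < 0"
  proof -
    have "has_nontriv_sol l a b 1"
      using has_nontriv_sol_three_if_Sigma_ab_neg[of a b] assms(2,3) that by auto
    then have "enat 2 \<le> sbar l a b" using Suc_le_sbar[of 1 l a b] by (simp add: numeral_2_eq_2)
    moreover have "sbar l a b \<le> enat 2" using le that by simp
    ultimately show ?thesis by (simp add: numeral_eq_enat)
  qed
qed

end
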